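(* Let $p>1$. For every $x\in(0,1)$, (1) $\displaystyle \left(1+\frac{x^p}{p(1+p)}\right)x<\arcsin_p x<\frac{\pi_p}{2}\,x$; (2) $\displaystyle \left(1+\frac{1-x^p}{p(1+p)}\right)(1-x^p)^{1/p}<\arccos_p x<\frac{\pi_p}{2}\,(1-x^p)^{1/p}$; (3) $\displaystyle \frac{\bigl(p(1+p)(1+x^p)+x^p\bigr)x}{p(1+p)(1+x^p)^{1+1/p}}<\arctan_p x<2^{1/p}\,b_p\left(\frac{x^p}{1+x^p}\right)^{1/p}$.
   Context: For $p>1$ and $x\in(0,1)$: $\arcsin_p x=\int_0^x(1-t^p)^{-1/p}\,dt$, $\arctan_p x=\int_0^x(1+t^p)^{-1}\,dt$, and $\arccos_p x=\arcsin_p\bigl((1-x^p)^{1/p}\bigr)$. Further $\pi_p=\frac{2\pi}{p\sin(\pi/p)}$ (so that $\arcsin_p(1)=\pi_p/2$), and $b_p=2^{-1/p}F\left(\frac1p,\frac1p;1+\frac1p;\frac12\right)$, where $F(a,b;c;z)=\sum_{n\ge0}\frac{(a,n)(b,n)}{(c,n)}\frac{z^n}{n!}$ is the Gaussian hypergeometric function, $(a,n)=a(a+1)\cdots(a+n-1)$, $(a,0)=1$. *)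

theory Defs
  imports "HOL-Analysis.Analysis"
begin

definition arcsin_p :: "real \<Rightarrow> real \<Rightarrow> real" where
  "arcsin_p p x = integral {0..x} (\<lambda>t. (1 - t powr p) powr (-1/p))"

definition arctan_p :: "real \<Rightarrow> real \<Rightarrow> real" where
  "arctan_p p x = integral {0..x} (\<lambda>t. 1 / (1 + t powr p))"

definition arccos_p :: "real \<Rightarrow> real \<Rightarrow> real" where
  "arccos_p p x = arcsin_p p ((1 - x powr p) powr (1/p))"

definition pi_p :: "real \<Rightarrow> real" where
  "pi_p p = 2 * pi / (p * sin (pi / p))"

definition hypergeom_F :: "real \<Rightarrow> real \<Rightarrow> real \<Rightarrow> real \<Rightarrow> real" where
  "hypergeom_F a b c z =
     (\<Sum>n. pochhammer a n * pochhammer b n / pochhammer c n * z ^ n / fact n)"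

definition b_p :: "real \<Rightarrow> real" where
  "b_p p = 2 powr (-1/p) * hypergeom_F (1/p) (1/p) (1 + 1/p) (1/2)"

end

theory Submission
  imports Defs
begin

text \<open>All three functions are expressed through
  \<open>G(w) = F(1/p, 1/p; 1 + 1/p; w)\<close>, a power series with positive coefficients.
  Expanding \<open>(1 - t^p)^(-1/p)\<close> binomially and integrating termwise gives
  \<open>arcsin_p x = x G(x^p)\<close>; \<open>arccos_p x\<close> is \<open>arcsin_p\<close> at \<open>(1 - x^p)^(1/p)\<close>, and the
  substitution \<open>t = s (1 + s^p)^(-1/p)\<close> turns \<open>arctan_p x\<close> into \<open>arcsin_p\<close> at
  \<open>(x^p/(1 + x^p))^(1/p)\<close>, whose \<open>p\<close>-th power is below \<open>1/2\<close>.
  Since \<open>G\<close> is strictly increasing on \<open>[0,1]\<close> and exceeds its two-term truncation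
  \<open>1 + w/(p(1+p))\<close>, the bounds follow from \<open>G(1) = B(1/p, 1 - 1/p)/p = \<pi>_p/2\<close> and
  \<open>G(1/2) = 2^(1/p) b_p\<close>.\<close>

lemma sums_pochhammer_binomial:
  fixes a w :: real
  assumes "0 \<le> w" "w < 1"
  shows "(\<lambda>n. pochhammer a n / fact n * w ^ n) sums (1 - w) powr (-a)"
proof -
  have "(\<lambda>n. ((-a) gchoose n) * (-w) ^ n) sums (1 + (-w)) powr (-a)"
    by (rule gen_binomial_real) (use assms in auto)
  moreover have "((-a) gchoose n) * (-w) ^ n = pochhammer a n / fact n * w ^ n" for n
    unfolding gbinomial_pochhammer by (simp add: power_minus[of w] field_simps)
  ultimately show ?thesis by simp
qed

lemma sums_integral_nonneg_series:
  fixes g :: "nat \<Rightarrow> real \<Rightarrow> real"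
  assumes g_integral: "\<And>n. (g n has_integral I n) S"
    and g_nonneg: "\<And>n t. t \<in> S \<Longrightarrow> 0 \<le> g n t"
    and g_sums: "\<And>t. t \<in> S \<Longrightarrow> (\<lambda>n. g n t) sums F t"
    and F_integrable: "F integrable_on S"
  shows "I sums integral S F"
proof -
  define f where "f k t = (\<Sum>n<k. g n t)" for k t
  have f_integral: "(f k has_integral (\<Sum>n<k. I n)) S" for k
    unfolding f_def by (intro has_integral_sum) (auto intro: g_integral)
  have f_le_F: "f k t \<le> F t" if "t \<in> S" for k t
  proof -
    have "(\<Sum>n<k. g n t) \<le> (\<Sum>n. g n t)"
      using g_sums[OF that] g_nonneg[OF that] by (intro sum_le_suminf) (auto simp: sums_iff)
    then show ?thesis unfolding f_def using g_sums[OF that] by (simp add: sums_iff)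
  qed
  have "F integrable_on S \<and> (\<lambda>k. integral S (f k)) \<longlonglongrightarrow> integral S F"
  proof (rule monotone_convergence_increasing)
    show "f k integrable_on S" for k using f_integral by blast
    show "f k t \<le> f (Suc k) t" if "t \<in> S" for k t
      unfolding f_def using g_nonneg[OF that] by simp
    show "(\<lambda>k. f k t) \<longlonglongrightarrow> F t" if "t \<in> S" for t
      using g_sums[OF that] unfolding f_def sums_def .
    have "\<bar>integral S (f k)\<bar> \<le> integral S F" for k
    proof -
      have "0 \<le> integral S (f k)"
        using f_integral by (intro has_integral_nonneg[OF integrable_integral])
          (auto simp: f_def g_nonneg sum_nonneg)
      moreover have "integral S (f k) \<le> integral S F"
        using f_integral F_integrable f_le_F by (intro integral_le) auto
      ultimately show ?thesis by simp
    qed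
    then show "bounded (range (\<lambda>k. integral S (f k)))"
      unfolding bounded_real by blast
  qed
  moreover have "integral S (f k) = (\<Sum>n<k. I n)" for k
    using f_integral by blast
  ultimately show ?thesis unfolding sums_def by simp
qed

lemma suminf_strict_mono:
  fixes f g :: "nat \<Rightarrow> real"
  assumes "summable f" "summable g" "\<And>n. f n \<le> g n" "f i < g i"
  shows "suminf f < suminf g"
proof -
  have "(\<Sum>n<0. g n - f n) < (\<Sum>n. g n - f n)"
    by (rule sum_less_suminf2[of _ 0 i]) (use assms in \<open>auto intro: summable_diff\<close>)
  then show ?thesis using suminf_diff[OF assms(2,1)] by simp
qed

lemma sums_Beta_complement:
  fixes a :: real
  assumes a: "0 < a" "a < 1"
  shows "(\<lambda>n. pochhammer a n / fact n / (n + a)) sums Beta a (1 - a)"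
proof -
  define B where "B t = t powr (a - 1) * (1 - t) powr ((1 - a) - 1)" for t :: real
  have B_integral: "(B has_integral Beta a (1 - a)) {0<..<1}"
    unfolding B_def has_integral_Icc_iff_Ioo[symmetric]
    by (rule has_integral_Beta_real) (use a in auto)
  have "(\<lambda>n. pochhammer a n / fact n / (n + a)) sums integral {0<..<1} B"
  proof (rule sums_integral_nonneg_series[where g = "\<lambda>n t. pochhammer a n / fact n * t ^ n * t powr (a - 1)"])
    fix n :: nat
    have "((\<lambda>t. t powr (n + a - 1)) has_integral 1 / (n + a)) {0<..<1}"
      using has_integral_powr_from_0[of "n + a - 1" 1] a by (simp add: has_integral_Icc_iff_Ioo)
    then have "((\<lambda>t. t ^ n * t powr (a - 1)) has_integral 1 / (n + a)) {0<..<1}"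
      by (rule has_integral_cong[THEN iffD1, rotated])
        (simp add: powr_realpow[symmetric] powr_add[symmetric] add_diff_eq)
    from has_integral_mult_right[OF this, of "pochhammer a n / fact n"]
    show "((\<lambda>t. pochhammer a n / fact n * t ^ n * t powr (a - 1)) has_integral
            pochhammer a n / fact n / (n + a)) {0<..<1}"
      by (simp add: mult.assoc)
  next
    fix n t assume "t \<in> {0<..<1::real}"
    then show "0 \<le> pochhammer a n / fact n * t ^ n * t powr (a - 1)"
      using a by (simp add: pochhammer_pos less_imp_le)
  next
    fix t assume t: "t \<in> {0<..<1::real}"
    from sums_mult2[OF sums_pochhammer_binomial[of t a], of "t powr (a - 1)"] t
    show "(\<lambda>n. pochhammer a n / fact n * t ^ n * t powr (a - 1)) sums B t"
      by (simp add: B_def mult.commute)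
  qed (use B_integral in blast)
  with B_integral show ?thesis by (simp add: integral_unique)
qed

lemma Beta_complement:
  fixes a :: real
  assumes "0 < a" "a < 1"
  shows "Beta a (1 - a) = pi / sin (pi * a)"
proof -
  have "complex_of_real (Gamma a * Gamma (1 - a)) = complex_of_real (pi / sin (pi * a))"
    using Gamma_reflection_complex[of "complex_of_real a"]
    by (simp flip: Gamma_complex_of_real sin_of_real)
  then show ?thesis unfolding Beta_def by (simp del: of_real_mult of_real_divide)
qed

definition hypergeom_aa_coeff :: "real \<Rightarrow> nat \<Rightarrow> real" where
  "hypergeom_aa_coeff a n = pochhammer a n / fact n * (a / (a + n))"

lemma hypergeom_aa_coeff_pos: "0 < a \<Longrightarrow> 0 < hypergeom_aa_coeff a n"
  unfolding hypergeom_aa_coeff_def by (simp add: pochhammer_pos add_pos_nonneg)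

lemma pochhammer_divide_pochhammer_plus_one:
  fixes a :: real
  assumes "0 < a"
  shows "pochhammer a n / pochhammer (1 + a) n = a / (a + n)"
proof -
  have "a * pochhammer (a + 1) n = (a + n) * pochhammer a n"
    using pochhammer_rec[of a n] pochhammer_rec'[of a n] by simp
  moreover have "0 < pochhammer (1 + a) n" "0 < a + n"
    using assms by (auto intro: pochhammer_pos)
  ultimately show ?thesis by (simp add: field_simps add.commute)
qed

lemma hypergeom_F_aa:
  assumes "0 < a"
  shows "hypergeom_F a a (1 + a) z = (\<Sum>n. hypergeom_aa_coeff a n * z ^ n)"
proof -
  have "pochhammer a n * pochhammer a n / pochhammer (1 + a) n * z ^ n / fact n
        = hypergeom_aa_coeff a n * z ^ n" for n
    unfolding hypergeom_aa_coeff_def pochhammer_divide_pochhammer_plus_one[OF assms, symmetric]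
    by (simp add: divide_inverse mult_ac)
  then show ?thesis unfolding hypergeom_F_def by simp
qed

lemma hypergeom_aa_coeff_sums:
  assumes "0 < a" "a < 1"
  shows "hypergeom_aa_coeff a sums (pi * a / sin (pi * a))"
proof -
  have "(\<lambda>n. a * (pochhammer a n / fact n / (n + a))) = hypergeom_aa_coeff a"
    by (simp add: fun_eq_iff hypergeom_aa_coeff_def add.commute)
  with sums_mult[OF sums_Beta_complement[OF assms], of a]
  show ?thesis by (simp add: Beta_complement[OF assms] mult.commute)
qed

lemma summable_hypergeom_aa:
  assumes a: "0 < a" "a < 1" and z: "0 \<le> z" "z \<le> 1"
  shows "summable (\<lambda>n. hypergeom_aa_coeff a n * z ^ n)"
proof (rule summable_comparison_test'[OF sums_summable[OF hypergeom_aa_coeff_sums[OF a]]])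
  fix n
  show "norm (hypergeom_aa_coeff a n * z ^ n) \<le> hypergeom_aa_coeff a n"
    using hypergeom_aa_coeff_pos[of a n] a z by (simp add: mult_left_le power_le_one)
qed

lemma hypergeom_F_aa_at_1:
  assumes "0 < a" "a < 1"
  shows "hypergeom_F a a (1 + a) 1 = pi * a / sin (pi * a)"
  using hypergeom_aa_coeff_sums[OF assms] by (simp add: hypergeom_F_aa assms sums_iff)

lemma hypergeom_F_aa_strict_mono:
  assumes a: "0 < a" "a < 1" and "0 \<le> w" "w < v" "v \<le> 1"
  shows "hypergeom_F a a (1 + a) w < hypergeom_F a a (1 + a) v"
  unfolding hypergeom_F_aa[OF a(1)]
proof (rule suminf_strict_mono[of _ _ 1])
  show "summable (\<lambda>n. hypergeom_aa_coeff a n * w ^ n)"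
    "summable (\<lambda>n. hypergeom_aa_coeff a n * v ^ n)"
    using assms by (auto intro: summable_hypergeom_aa)
  show "hypergeom_aa_coeff a n * w ^ n \<le> hypergeom_aa_coeff a n * v ^ n" for n
    using hypergeom_aa_coeff_pos[OF a(1), of n] assms by (intro mult_left_mono power_mono) auto
  show "hypergeom_aa_coeff a 1 * w ^ 1 < hypergeom_aa_coeff a 1 * v ^ 1"
    using hypergeom_aa_coeff_pos[OF a(1), of 1] assms by simp
qed

lemma hypergeom_F_aa_gt_two_terms:
  assumes a: "0 < a" "a < 1" and w: "0 < w" "w \<le> 1"
  shows "1 + a\<^sup>2 / (1 + a) * w < hypergeom_F a a (1 + a) w"
proof -
  have "(\<Sum>n<2. hypergeom_aa_coeff a n * w ^ n) < (\<Sum>n. hypergeom_aa_coeff a n * w ^ n)"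
    using hypergeom_aa_coeff_pos[OF a(1)] w
    by (intro sum_less_suminf summable_hypergeom_aa a) auto
  moreover have "(\<Sum>n<2. hypergeom_aa_coeff a n * w ^ n) = 1 + a\<^sup>2 / (1 + a) * w"
    using a by (simp add: numeral_2_eq_2 hypergeom_aa_coeff_def power2_eq_square add.commute)
  ultimately show ?thesis by (simp add: hypergeom_F_aa[OF a(1)])
qed

lemma powr_less_one_nonneg:
  fixes t p :: real
  assumes "0 \<le> t" "t < 1" "0 < p"
  shows "t powr p < 1"
  using assms powr01_less_one[of t p] by (cases "t = 0") auto

lemma less_one_if_powr_less_one:
  fixes y p :: real
  assumes "0 < p" "y powr p < 1"
  shows "y < 1"
  using assms ge_one_powr_ge_zero[of y p] by fastforce

lemma continuous_on_arcsin_p_integrand: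
  fixes p X :: real
  assumes "0 < p" "X < 1"
  shows "continuous_on {0..X} (\<lambda>t. (1 - t powr p) powr (-1/p))"
proof (rule continuous_on_powr)
  show "continuous_on {0..X} (\<lambda>t. 1 - t powr p)"
    using assms by (intro continuous_on_powr' continuous_intros) auto
  show "\<forall>t\<in>{0..X}. 1 - t powr p \<noteq> 0"
    using assms powr_less_one_nonneg[of _ p] by fastforce
qed (rule continuous_on_const)

lemma arcsin_p_eq_hypergeom_F:
  assumes p: "1 < p" and x: "0 \<le> x" "x < 1"
  shows "arcsin_p p x = x * hypergeom_F (1/p) (1/p) (1 + 1/p) (x powr p)"
proof -
  have a: "0 < 1/p" "1/p < 1" using p by auto
  have w: "0 \<le> x powr p" "x powr p < 1" using p x by (auto intro: powr_less_one_nonneg)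
  have "(\<lambda>n. x * (hypergeom_aa_coeff (1/p) n * (x powr p) ^ n)) sums arcsin_p p x"
    unfolding arcsin_p_def
  proof (rule sums_integral_nonneg_series[where g = "\<lambda>n t. pochhammer (1/p) n / fact n * (t powr p) ^ n"])
    fix n :: nat
    have "((\<lambda>t. t powr (p * n)) has_integral x powr (p * n + 1) / (p * n + 1)) {0..x}"
      using p x by (intro has_integral_powr_from_0) (auto intro: less_le_trans[of _ 0])
    then have "((\<lambda>t. (t powr p) ^ n) has_integral x powr (p * n + 1) / (p * n + 1)) {0..x}"
      by (rule has_integral_spike_finite[of "{0}", rotated 2]) (auto simp: powr_power mult_ac)
    moreover have "x powr (p * n + 1) = x * (x powr p) ^ n"
      using x by (cases "x = 0") (auto simp: powr_add powr_power mult_ac)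
    ultimately have "((\<lambda>t. (t powr p) ^ n) has_integral x * (x powr p) ^ n / (p * n + 1)) {0..x}"
      by simp
    from has_integral_mult_right[OF this, of "pochhammer (1/p) n / fact n"]
    show "((\<lambda>t. pochhammer (1/p) n / fact n * (t powr p) ^ n) has_integral
            x * (hypergeom_aa_coeff (1/p) n * (x powr p) ^ n)) {0..x}"
      using p by (simp add: hypergeom_aa_coeff_def field_simps)
  next
    fix n t assume "t \<in> {0..x}"
    then show "0 \<le> pochhammer (1/p) n / fact n * (t powr p) ^ n"
      using p by (simp add: pochhammer_pos less_imp_le)
  next
    fix t assume "t \<in> {0..x}"
    then show "(\<lambda>n. pochhammer (1/p) n / fact n * (t powr p) ^ n) sums (1 - t powr p) powr (-1/p)"
      using sums_pochhammer_binomial[of "t powr p" "1/p"] p x by (simp add: powr_less_one_nonneg)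
  qed (use continuous_on_arcsin_p_integrand p x in \<open>auto intro: integrable_continuous_interval\<close>)
  moreover have "(\<lambda>n. x * (hypergeom_aa_coeff (1/p) n * (x powr p) ^ n))
                   sums (x * hypergeom_F (1/p) (1/p) (1 + 1/p) (x powr p))"
    unfolding hypergeom_F_aa[OF a(1)]
    using a w by (intro sums_mult summable_sums summable_hypergeom_aa) auto
  ultimately show ?thesis by (simp add: sums_unique2)
qed

lemma hypergeom_F_1_eq_pi_p:
  assumes "1 < p"
  shows "hypergeom_F (1/p) (1/p) (1 + 1/p) 1 = pi_p p / 2"
  using assms hypergeom_F_aa_at_1[of "1/p"] by (simp add: pi_p_def)

lemma arcsin_p_gt:
  assumes p: "1 < p" and y: "0 < y" "y < 1"
  shows "(1 + y powr p / (p * (1 + p))) * y < arcsin_p p y"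
proof -
  have "1 + (1/p)\<^sup>2 / (1 + 1/p) * y powr p < hypergeom_F (1/p) (1/p) (1 + 1/p) (y powr p)"
    using p y powr_less_one_nonneg[of y p] by (intro hypergeom_F_aa_gt_two_terms) auto
  moreover have "(1/p)\<^sup>2 / (1 + 1/p) * y powr p = y powr p / (p * (1 + p))"
    using p by (simp add: field_simps power2_eq_square)
  ultimately show ?thesis
    using p y by (simp add: arcsin_p_eq_hypergeom_F mult.commute)
qed

lemma arcsin_p_less:
  assumes p: "1 < p" and y: "0 < y" "y powr p < w" "w \<le> 1"
  shows "arcsin_p p y < y * hypergeom_F (1/p) (1/p) (1 + 1/p) w"
proof -
  have "y < 1"
    using y p less_one_if_powr_less_one[of p y] by simp
  then show ?thesis
    using p y by (simp add: arcsin_p_eq_hypergeom_F hypergeom_F_aa_strict_mono)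
qed

lemma arcsin_p_bounds:
  assumes "1 < p" "0 < y" "y < 1"
  shows "(1 + y powr p / (p * (1 + p))) * y < arcsin_p p y \<and> arcsin_p p y < pi_p p / 2 * y"
  using arcsin_p_gt[OF assms] arcsin_p_less[of p y 1] assms
  by (simp add: powr_less_one_nonneg hypergeom_F_1_eq_pi_p mult.commute)

lemma has_real_derivative_arctan_p_substitution:
  fixes p x :: real
  assumes p: "0 < p" and x: "0 < x"
  shows "((\<lambda>x. x * (1 + x powr p) powr (-1/p)) has_real_derivative
           (1 + x powr p) powr (-1 - 1/p)) (at x)"
proof -
  define u where "u = 1 + x powr p"
  have u: "0 < u" unfolding u_def by (simp add: add_pos_nonneg)
  have "((\<lambda>x. x * (1 + x powr p) powr (-1/p)) has_real_derivative
          u powr (-1/p) + x * ((-1/p) * u powr (-1/p - 1) * (p * x powr (p - 1)))) (at x)"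
    unfolding u_def using x p by (auto intro!: derivative_eq_intros simp: add_pos_nonneg)
  also have "u powr (-1/p) + x * ((-1/p) * u powr (-1/p - 1) * (p * x powr (p - 1)))
             = u powr (-1/p - 1) * (u - x powr p)"
  proof -
    have "x * x powr (p - 1) = x powr p" "u powr (-1/p) = u powr (-1/p - 1) * u"
      using x u by (simp_all add: powr_diff)
    then show ?thesis using p by (simp add: algebra_simps)
  qed
  also have "\<dots> = (1 + x powr p) powr (-1 - 1/p)"
  proof -
    have "-1/p - 1 = -1 - 1/p" by simp
    then show ?thesis unfolding u_def by (simp only: add_diff_cancel_right' mult_1_right)
  qed
  finally show ?thesis .
qed

lemma powr_arctan_p_substitution:
  fixes p x :: real
  assumes "0 < p"
  shows "(x * (1 + x powr p) powr (-1/p)) powr p = x powr p / (1 + x powr p)"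
proof -
  have "(x * (1 + x powr p) powr (-1/p)) powr p = x powr p * (1 + x powr p) powr (-1/p * p)"
    by (simp only: powr_mult powr_powr)
  also have "-1/p * p = -1" using assms by simp
  finally show ?thesis by (simp add: add_pos_nonneg)
qed

lemma arcsin_p_integrand_arctan_p_substitution:
  fixes p x :: real
  assumes p: "0 < p" and x: "0 \<le> x"
  shows "(1 + x powr p) powr (-1 - 1/p) *
           (1 - (x * (1 + x powr p) powr (-1/p)) powr p) powr (-1/p) = 1 / (1 + x powr p)"
proof -
  define u where "u = 1 + x powr p"
  have u: "0 < u" unfolding u_def by (simp add: add_pos_nonneg)
  have "1 - (x * u powr (-1/p)) powr p = u powr (-1)"
    using powr_arctan_p_substitution[OF p, of x] u
    by (simp add: u_def[symmetric] field_simps)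
  moreover have "(u powr (-1)) powr (-1/p) = u powr (-1 * (-1/p))"
    by (rule powr_powr)
  ultimately have "(1 - (x * u powr (-1/p)) powr p) powr (-1/p) = u powr (1/p)"
    by simp
  moreover have "u powr (-1 - 1/p) * u powr (1/p) = 1 / u"
    using u by (simp add: powr_add[symmetric] powr_minus divide_inverse)
  ultimately show ?thesis unfolding u_def by simp
qed

lemma arctan_p_eq_arcsin_p:
  fixes p X :: real
  assumes p: "1 < p" and X: "0 \<le> X" "X < 1"
  shows "arctan_p p X = arcsin_p p (X * (1 + X powr p) powr (-1/p))"
proof -
  define h where "h x = x * (1 + x powr p) powr (-1/p)" for x
  define f where "f t = (1 - t powr p) powr (-1/p)" for t
  have h_le: "0 \<le> h x \<and> h x \<le> x" if "0 \<le> x" for x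
  proof -
    have "1 \<le> (1 + x powr p) powr (1/p)"
      using p by (intro ge_one_powr_ge_zero) auto
    then have "(1 + x powr p) powr (-1/p) \<le> 1"
      by (auto simp: powr_minus_divide divide_le_eq)
    then show ?thesis unfolding h_def using that by (simp add: mult_left_le)
  qed
  have "((\<lambda>x. (1 + x powr p) powr (-1 - 1/p) *\<^sub>R f (h x)) has_integral integral {h 0..h X} f) {0..X}"
  proof (rule has_integral_substitution_strong[of "{0}" 0 X h 0 X f])
    show "h ` {0..X} \<subseteq> {0..X}" using h_le by fastforce
    show "continuous_on {0..X} f"
      unfolding f_def using p X by (intro continuous_on_arcsin_p_integrand) auto
    show "continuous_on {0..X} h"
      unfolding h_def using p
      by (intro continuous_intros continuous_on_powr') (auto simp: add_nonneg_eq_0_iff)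
    show "(h has_field_derivative (1 + x powr p) powr (-1 - 1/p)) (at x within {0..X})"
      if "x \<in> {0..X} - {0}" for x
      unfolding h_def
      by (rule has_field_derivative_at_within, rule has_real_derivative_arctan_p_substitution)
        (use p that in auto)
  qed (use X h_le[of X] in \<open>auto simp: h_def\<close>)
  then have "((\<lambda>x. 1 / (1 + x powr p)) has_integral integral {h 0..h X} f) {0..X}"
    by (rule has_integral_cong[THEN iffD1, rotated])
      (use p arcsin_p_integrand_arctan_p_substitution[of p] in \<open>auto simp: f_def h_def\<close>)
  then have "arctan_p p X = integral {h 0..h X} f"
    unfolding arctan_p_def by (rule integral_unique)
  then show ?thesis by (simp add: arcsin_p_def f_def[abs_def] h_def)
qed

lemma arctan_p_bounds:
  assumes p: "1 < p" and x: "0 < x" "x < 1"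
  shows "(p * (1 + p) * (1 + x powr p) + x powr p) * x
            / (p * (1 + p) * (1 + x powr p) powr (1 + 1/p)) < arctan_p p x \<and>
         arctan_p p x < 2 powr (1/p) * b_p p * (x powr p / (1 + x powr p)) powr (1/p)"
proof -
  define W where "W = x powr p"
  define z where "z = x * (1 + W) powr (-1/p)"
  have W: "0 < W" "W < 1"
    unfolding W_def using p x by (auto intro: powr_less_one_nonneg)
  have z: "0 < z" using x W unfolding z_def by simp
  have zp: "z powr p = W / (1 + W)"
    unfolding z_def W_def by (rule powr_arctan_p_substitution) (use p in simp)
  have zp_half: "z powr p < 1/2" unfolding zp using W by (simp add: field_simps)
  then have "z < 1" using p less_one_if_powr_less_one[of p z] by simp
  have arctan_eq: "arctan_p p x = arcsin_p p z"
    unfolding z_def W_def using p x by (simp add: arctan_p_eq_arcsin_p)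
  have lower_eq: "(p * (1 + p) * (1 + W) + W) * x / (p * (1 + p) * (1 + W) powr (1 + 1/p))
                   = (1 + z powr p / (p * (1 + p))) * z"
  proof -
    define v where "v = (1 + W) powr (1/p)"
    have v: "0 < v" unfolding v_def using W by simp
    have v_eqs: "(1 + W) powr (1 + 1/p) = (1 + W) * v" "z = x / v"
      unfolding v_def z_def using W by (simp_all add: powr_add powr_minus_divide)
    have "0 < p * (1 + p) * (1 + W)" using p W by simp
    then show ?thesis unfolding zp unfolding v_eqs using v by (simp add: field_simps)
  qed
  have upper_eq: "2 powr (1/p) * b_p p * (W / (1 + W)) powr (1/p)
                   = z * hypergeom_F (1/p) (1/p) (1 + 1/p) (1/2)"
  proof -
    have "2 powr (1/p) * b_p p = hypergeom_F (1/p) (1/p) (1 + 1/p) (1/2)"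
      unfolding b_p_def by (simp add: mult.assoc[symmetric] powr_add[symmetric])
    moreover have "(W / (1 + W)) powr (1/p) = z"
      unfolding zp[symmetric] using z p by (simp add: powr_powr)
    ultimately show ?thesis by (simp only: mult.commute)
  qed
  show ?thesis
    unfolding W_def[symmetric] arctan_eq lower_eq upper_eq
    using arcsin_p_gt[OF p z \<open>z < 1\<close>] arcsin_p_less[OF p z zp_half] by simp
qed

theorem theorem1p1:
  fixes p x :: real
  assumes "p > 1" and "0 < x" and "x < 1"
  shows "(1 + x powr p / (p * (1 + p))) * x < arcsin_p p x \<and>
         arcsin_p p x < pi_p p / 2 * x \<and>
         (1 + (1 - x powr p) / (p * (1 + p))) * (1 - x powr p) powr (1/p) < arccos_p p x \<and>
         arccos_p p x < pi_p p / 2 * (1 - x powr p) powr (1/p) \<and>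
         (p * (1 + p) * (1 + x powr p) + x powr p) * x
            / (p * (1 + p) * (1 + x powr p) powr (1 + 1/p)) < arctan_p p x \<and>
         arctan_p p x < 2 powr (1/p) * b_p p * (x powr p / (1 + x powr p)) powr (1/p)"
proof -
  note p = assms(1)
  define y where "y = (1 - x powr p) powr (1/p)"
  have "0 < x powr p" "x powr p < 1"
    using assms by (auto intro: powr_less_one_nonneg)
  then have y: "0 < y" "y < 1" and yp: "y powr p = 1 - x powr p"
    unfolding y_def using p by (auto simp: powr_powr powr01_less_one)
  show ?thesis
    using arcsin_p_bounds[OF p assms(2,3)] arctan_p_bounds[OF assms]
      arcsin_p_bounds[OF p y, unfolded yp, unfolded y_def]
    unfolding arccos_p_def by simp
qed

end
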